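(* Let $R$ be an associative ring with identity and involution $*$, and let $a\in R^{\#}\cap R^{\dagger}$. Then $a\in R^{SEP}$ if and only if $a^{\dagger}a(a^{\dagger})^*a^{\dagger}\in PE(R)$.
   Context: An involution on $R$ is a map $x\mapsto x^*$ with $(x^* )^*=x$, $(x+y)^*=x^*+y^*$, $(xy)^*=y^*x^*$. An element $a$ is Moore–Penrose invertible if there is $b$ with $aba=a$, $bab=b$, $(ab)^*=ab$, $(ba)^*=ba$; such $b$ is unique, denoted $a^{\dagger}$, and $R^{\dagger}$ is the set of such $a$. An element $a$ is group invertible if there is $b$ with $aba=a$, $bab=b$, $ab=ba$; such $b$ is unique, denoted $a^{\#}$, and $R^{\#}$ is the set of such $a$. $PE(R)=\{e\in R: e^2=e=e^*\}$ is the set of projections. For $a\in R^{\#}\cap R^{\dagger}$, $a$ is SEP if $a^*=a^{\dagger}=a^{\#}$; $R^{SEP}$ denotes the set of SEP elements. *)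

theory Defs
  imports Main
begin

definition involution :: "('a::ring_1 \<Rightarrow> 'a) \<Rightarrow> bool" where
  "involution s \<longleftrightarrow> (\<forall>x. s (s x) = x) \<and> (\<forall>x y. s (x + y) = s x + s y)
     \<and> (\<forall>x y. s (x * y) = s y * s x)"

definition is_mp_inverse :: "('a::ring_1 \<Rightarrow> 'a) \<Rightarrow> 'a \<Rightarrow> 'a \<Rightarrow> bool" where
  "is_mp_inverse s a b \<longleftrightarrow> a * b * a = a \<and> b * a * b = b \<and> s (a * b) = a * b \<and> s (b * a) = b * a"

definition mp_invertible :: "('a::ring_1 \<Rightarrow> 'a) \<Rightarrow> 'a \<Rightarrow> bool" where
  "mp_invertible s a \<longleftrightarrow> (\<exists>b. is_mp_inverse s a b)"

definition mp_inv :: "('a::ring_1 \<Rightarrow> 'a) \<Rightarrow> 'a \<Rightarrow> 'a" where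
  "mp_inv s a = (THE b. is_mp_inverse s a b)"

definition is_group_inverse :: "'a::ring_1 \<Rightarrow> 'a \<Rightarrow> bool" where
  "is_group_inverse a b \<longleftrightarrow> a * b * a = a \<and> b * a * b = b \<and> a * b = b * a"

definition group_invertible :: "'a::ring_1 \<Rightarrow> bool" where
  "group_invertible a \<longleftrightarrow> (\<exists>b. is_group_inverse a b)"

definition group_inv :: "'a::ring_1 \<Rightarrow> 'a" where
  "group_inv a = (THE b. is_group_inverse a b)"

definition projection :: "('a::ring_1 \<Rightarrow> 'a) \<Rightarrow> 'a \<Rightarrow> bool" where
  "projection s e \<longleftrightarrow> e * e = e \<and> e = s e"

definition SEP :: "('a::ring_1 \<Rightarrow> 'a) \<Rightarrow> 'a \<Rightarrow> bool" where
  "SEP s a \<longleftrightarrow> group_invertible a \<and> mp_invertible s a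
     \<and> s a = mp_inv s a \<and> mp_inv s a = group_inv a"

end

theory Submission
  imports Defs
begin

text \<open>
  Write \<open>b = a\<^sup>\<dagger>\<close>, \<open>P = b a\<close>, \<open>Q = a b\<close> and \<open>H = b\<^sup>* b\<close>, so that the element in question
  is \<open>e = P H\<close>. Since \<open>Q H = H\<close> and \<open>H a a\<^sup>* = Q\<close>, self-adjointness of \<open>e\<close>, i.e. \<open>P H = H P\<close>,
  gives \<open>P Q = Q H P a a\<^sup>* = Q P Q\<close>, hence \<open>P Q = Q P\<close> after taking adjoints. For a group
  invertible \<open>a\<close>, commuting \<open>P\<close> and \<open>Q\<close> are equal, so \<open>a\<^sup>\<dagger> = a\<^sup>#\<close>. Then \<open>e = H\<close>, and idempotency
  of \<open>H\<close> turns \<open>Q = H a a\<^sup>*\<close> into \<open>Q = H Q\<close>, whose adjoint is \<open>Q = H\<close>. Finally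
  \<open>a\<^sup>* = a\<^sup>* Q = a\<^sup>* b\<^sup>* b = b a b = b\<close>.
\<close>

lemma involution_invol: "involution s \<Longrightarrow> s (s x) = x"
  by (simp add: involution_def)

lemma involution_mult: "involution s \<Longrightarrow> s (x * y) = s y * s x"
  by (simp add: involution_def)

lemma is_mp_inverse_unique:
  fixes s :: "'a::ring_1 \<Rightarrow> 'a"
  assumes s: "involution s" and b: "is_mp_inverse s a b" and c: "is_mp_inverse s a c"
  shows "b = c"
proof -
  note star = involution_mult[OF s]
  have b_ax: "a * b * a = a" "b * a * b = b" "s (a * b) = a * b" "s (b * a) = b * a"
    using b by (auto simp: is_mp_inverse_def)
  have c_ax: "a * c * a = a" "c * a * c = c" "s (a * c) = a * c" "s (c * a) = c * a"
    using c by (auto simp: is_mp_inverse_def)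
  have "a * b = s (a * c) * s (a * b)"
    using b_ax c_ax by (metis mult.assoc)
  also have "\<dots> = a * c"
    using b_ax c_ax by (metis star mult.assoc)
  finally have ab: "a * b = a * c" .
  have "b * a = s (b * a) * s (c * a)"
    using b_ax c_ax by (metis mult.assoc)
  also have "\<dots> = c * a"
    using b_ax c_ax by (metis star mult.assoc)
  finally have ba: "b * a = c * a" .
  have "b = c * (a * b)"
    using b_ax ba by (metis mult.assoc)
  also have "\<dots> = c"
    using ab c_ax by (metis mult.assoc)
  finally show ?thesis .
qed

lemma mp_inv_eqI: "involution s \<Longrightarrow> is_mp_inverse s a b \<Longrightarrow> mp_inv s a = b"
  unfolding mp_inv_def by (blast intro: is_mp_inverse_unique)

lemma is_group_inverse_unique:
  fixes a :: "'a::ring_1"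
  assumes b: "is_group_inverse a b" and c: "is_group_inverse a c"
  shows "b = c"
proof -
  have b_ax: "a * b * a = a" "b * a * b = b" "a * b = b * a"
    using b by (auto simp: is_group_inverse_def)
  have c_ax: "a * c * a = a" "c * a * c = c" "a * c = c * a"
    using c by (auto simp: is_group_inverse_def)
  have ab: "a * b = a * c"
    using b_ax c_ax by (metis mult.assoc)
  have "b = (a * c) * b"
    using b_ax ab by metis
  also have "\<dots> = c"
    using ab c_ax by (metis mult.assoc)
  finally show ?thesis .
qed

lemma group_inv_eqI: "is_group_inverse a b \<Longrightarrow> group_inv a = b"
  unfolding group_inv_def by (blast intro: is_group_inverse_unique)

locale mp_inverse_pair =
  fixes s :: "'a::ring_1 \<Rightarrow> 'a" and a b :: 'a
  assumes involution: "involution s" and mp_inverse: "is_mp_inverse s a b"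
begin

lemma mp_inv_eq: "mp_inv s a = b"
  using mp_inv_eqI involution mp_inverse .

lemmas star_invol = involution_invol[OF involution]
   and star_mult = involution_mult[OF involution]

lemma aba: "a * b * a = a"
  and bab: "b * a * b = b"
  and star_ab: "s (a * b) = a * b"
  and star_ba: "s (b * a) = b * a"
  using mp_inverse by (auto simp: is_mp_inverse_def)

lemma ab_star_b: "a * b * s b = s b"
proof -
  have "s b = s (b * (a * b))"
    using bab by (simp add: mult.assoc)
  also have "\<dots> = s (a * b) * s b"
    by (rule star_mult)
  also have "\<dots> = a * b * s b"
    by (simp only: star_ab)
  finally show ?thesis
    by (rule sym)
qed

lemma star_a_ab: "s a * (a * b) = s a"
proof -
  have "s a = s (a * b * a)"
    using aba by simp
  also have "\<dots> = s a * s (a * b)"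
    by (rule star_mult)
  also have "\<dots> = s a * (a * b)"
    by (simp only: star_ab)
  finally show ?thesis
    by (rule sym)
qed

lemma ba_star_a: "b * a * s a = s a"
proof -
  have "s a = s (a * (b * a))"
    using aba by (simp add: mult.assoc)
  also have "\<dots> = s (b * a) * s a"
    by (rule star_mult)
  also have "\<dots> = b * a * s a"
    by (simp only: star_ba)
  finally show ?thesis
    by (rule sym)
qed

lemma star_b_b_a_star_a: "s b * b * (a * s a) = a * b"
proof -
  have "s b * b * (a * s a) = s b * (b * a * s a)"
    by (simp add: mult.assoc)
  also have "\<dots> = s (a * b)"
    by (simp only: ba_star_a star_mult)
  finally show ?thesis
    by (simp only: star_ab)
qed

lemma is_group_inverse_if_commute: "a * b = b * a \<Longrightarrow> is_group_inverse a b"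
  using aba bab by (simp add: is_group_inverse_def)

lemma SEP_iff_star_eq_commute: "SEP s a \<longleftrightarrow> s a = b \<and> a * b = b * a"
proof
  assume SEP: "SEP s a"
  then obtain g where g: "is_group_inverse a g"
    by (auto simp: SEP_def group_invertible_def)
  have "s a = b" and "b = g"
    using SEP group_inv_eqI[OF g] by (simp_all add: SEP_def mp_inv_eq)
  with g show "s a = b \<and> a * b = b * a"
    by (simp add: is_group_inverse_def)
next
  assume "s a = b \<and> a * b = b * a"
  then have star_a: "s a = b" and g: "is_group_inverse a b"
    using is_group_inverse_if_commute by auto
  show "SEP s a"
    unfolding SEP_def group_invertible_def mp_invertible_def mp_inv_eq group_inv_eqI[OF g]
    using star_a g mp_inverse by blast
qed

lemma projection_if_star_eq_commute:
  assumes star_a: "s a = b" and ab: "a * b = b * a"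
  shows "projection s (b * a * s b * b)"
proof -
  have "s b = a"
    using star_invol star_a by metis
  then have "b * a * s b * b = a * b * a * b"
    using ab by simp
  also have "\<dots> = a * b"
    using aba by simp
  finally have e: "b * a * s b * b = a * b" .
  have "a * b * (a * b) = a * b"
    using aba by (simp add: mult.assoc[symmetric])
  then show ?thesis
    unfolding e projection_def using star_ab by simp
qed

lemma ranges_commute_if_hermitian:
  assumes hermitian: "s (b * a * s b * b) = b * a * s b * b"
  shows "b * a * (a * b) = a * b * (b * a)"
proof -
  define P Q H where "P = b * a" and "Q = a * b" and "H = s b * b"
  have star_P: "s P = P" and star_Q: "s Q = Q"
    unfolding P_def Q_def by (simp_all only: star_ab star_ba)
  have star_H: "s H = H"
    unfolding H_def by (simp add: star_mult star_invol)
  have "P * H = s (P * H)"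
    using hermitian by (simp add: P_def H_def mult.assoc)
  also have "\<dots> = H * P"
    using star_P star_H by (simp add: star_mult)
  finally have PH: "P * H = H * P" .
  have QH: "Q * H = H"
    unfolding Q_def H_def by (metis ab_star_b mult.assoc)
  have "P * Q = P * H * (a * s a)"
    using star_b_b_a_star_a by (simp add: P_def Q_def H_def mult.assoc)
  also have "\<dots> = Q * (H * P) * (a * s a)"
    using PH QH by (simp add: mult.assoc[symmetric])
  also have "\<dots> = Q * P * (H * (a * s a))"
    using PH by (metis mult.assoc)
  also have "\<dots> = Q * P * Q"
    using star_b_b_a_star_a by (simp add: Q_def H_def mult.assoc)
  finally have PQ: "P * Q = Q * P * Q" .
  have "Q * P = s (P * Q)"
    using star_P star_Q by (simp add: star_mult)
  also have "\<dots> = Q * P * Q"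
    unfolding PQ using star_P star_Q by (simp add: star_mult mult.assoc)
  finally have QP: "Q * P = Q * P * Q" .
  from PQ QP[symmetric] have "P * Q = Q * P"
    by (rule trans)
  then show ?thesis
    by (simp add: P_def Q_def)
qed

lemma commute_if_ranges_commute:
  assumes "group_invertible a" and PQ: "b * a * (a * b) = a * b * (b * a)"
  shows "a * b = b * a"
proof -
  obtain g where aga: "a * g * a = a" and ag: "a * g = g * a"
    using assms(1) by (auto simp: group_invertible_def is_group_inverse_def)
  have aP: "a * (b * a) = a"
    using aba by (simp add: mult.assoc)
  have "g * a * (a * b) = a * g * a * b"
    using ag by (simp add: mult.assoc[symmetric])
  then have Q: "g * a * (a * b) = a * b"
    using aga by simp
  have "b * a * (a * g) = b * (a * g * a)"
    using ag by (metis mult.assoc)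
  then have P: "b * a * (a * g) = b * a"
    using aga by simp
  have "a * b = g * (a * (b * a)) * (a * b)"
    using Q aP by simp
  also have "\<dots> = g * a * (b * a * (a * b))"
    by (simp add: mult.assoc)
  also have "\<dots> = g * a * (a * b) * (b * a)"
    using PQ by (simp add: mult.assoc)
  also have "\<dots> = a * b * (b * a)"
    using Q by simp
  finally have Q_QP: "a * b = a * b * (b * a)" .
  have "b * a = b * a * ((a * b * a) * g)"
    using P aba by simp
  also have "\<dots> = b * a * (a * b) * (a * g)"
    by (simp add: mult.assoc)
  also have "\<dots> = a * b * (b * a * (a * g))"
    using PQ by (simp add: mult.assoc)
  also have "\<dots> = a * b"
    using P Q_QP[symmetric] by simp
  finally show ?thesis ..
qed

lemma star_eq_if_commute_projection:
  assumes ab: "a * b = b * a" and proj: "projection s (b * a * s b * b)"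
  shows "s a = b"
proof -
  define H where "H = s b * b"
  have "b * a * s b * b = a * b * s b * b"
    using ab by simp
  then have e_H: "b * a * s b * b = H"
    unfolding H_def using ab_star_b by simp
  have HH: "H * H = H" and star_H: "s H = H"
    using proj unfolding e_H projection_def by metis+
  have HQ: "H * (a * s a) = a * b"
    unfolding H_def by (rule star_b_b_a_star_a)
  have QH: "a * b * H = H"
    unfolding H_def using ab_star_b by (simp add: mult.assoc[symmetric])
  have "a * b = H * H * (a * s a)"
    using HQ HH by simp
  also have "\<dots> = H * (a * b)"
    using HQ by (simp add: mult.assoc)
  finally have "s (a * b) = s (H * (a * b))"
    by (rule arg_cong)
  then have Q_H: "a * b = H"
    using star_ab star_H QH by (simp add: star_mult)
  have "s a = s a * H"
    using star_a_ab Q_H by simp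
  also have "\<dots> = s (b * a) * b"
    unfolding H_def by (simp add: star_mult mult.assoc)
  also have "\<dots> = b"
    using bab star_ba by simp
  finally show ?thesis .
qed

end

theorem theorem2p2:
  fixes s :: "'a::ring_1 \<Rightarrow> 'a" and a :: 'a
  assumes "involution s"
    and "group_invertible a"
    and "mp_invertible s a"
  shows "SEP s a \<longleftrightarrow>
    projection s (mp_inv s a * a * s (mp_inv s a) * mp_inv s a)"
proof -
  obtain b where "is_mp_inverse s a b"
    using assms(3) by (auto simp: mp_invertible_def)
  then interpret mp_inverse_pair s a b
    using assms(1) by unfold_locales
  show ?thesis
    unfolding SEP_iff_star_eq_commute mp_inv_eq
  proof (intro iffI conjI)
    assume proj: "projection s (b * a * s b * b)"
    then have "s (b * a * s b * b) = b * a * s b * b"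
      unfolding projection_def by metis
    then show ab: "a * b = b * a"
      using assms(2) commute_if_ranges_commute ranges_commute_if_hermitian by blast
    show "s a = b"
      using star_eq_if_commute_projection[OF ab proj] .
  qed (use projection_if_star_eq_commute in blast)
qed

end
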